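(* Let $n\in\mathbb N$ and let $G\subset H$ be subgroups of the symmetric group $S_n$. If for a ballean $X$ the $G$-symmetric power $[X]^n_G$ is normal, then the $H$-symmetric power $[X]^n_H$ is normal.
   Context: A ballean is a pair $(X,\mathcal E_X)$ where $X$ is a set and $\mathcal E_X$ is a family of subsets of $X\times X$ (entourages) such that: each $E\in\mathcal E_X$ contains the diagonal $\Delta_X$; for any $E,F\in\mathcal E_X$ there is $D\in\mathcal E_X$ with $E\circ F^{-1}\subset D$; and $\bigcup\mathcal E_X=X\times X$. For $E\in\mathcal E_X$, $x\in X$, $A\subset X$: $E[x]=\{y:(x,y)\in E\}$, $E[A]=\bigcup_{a\in A}E[a]$. $B\subset X$ is bounded if $B\subset E[x]$ for some $E\in\mathcal E_X$, $x\in X$; $\mathcal B_X$ is the family of bounded sets. Sets $A,B$ are asymptotically disjoint if $E[A]\cap E[B]\in\mathcal B_X$ for all $E\in\mathcal E_X$; $U$ is an asymptotic neighborhood of $A$ if $E[A]\setminus U\in\mathcal B_X$ for all $E$; $X$ is normal if any two asymptotically disjoint sets have disjoint asymptotic neighborhoods. The power $X^n$ ($n=\{0,\dots,n-1\}$) has entourages $\{(x,y)\in X^n\times X^n:(x(i),y(i))\in E_i\ \forall i\}$, $E_i\in\mathcal E_X$. For a subgroup $G\subset S_n$, $[X]^n_G=\{xG:x\in X^n\}$ where $xG=\{x\circ g:g\in G\}$, with entourages $\hat E=\{(xG,yG):(x,y)\in E\}$ for $E$ an entourage of $X^n$. *)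

theory Defs
  imports "HOL-Algebra.Sym_Groups" "HOL-Library.FuncSet"
begin

definition ballean :: "'a set \<Rightarrow> ('a \<times> 'a) set set \<Rightarrow> bool" where
  "ballean X EE \<longleftrightarrow>
     (\<forall>E\<in>EE. E \<subseteq> X \<times> X \<and> Id_on X \<subseteq> E) \<and>
     (\<forall>E\<in>EE. \<forall>F\<in>EE. \<exists>D\<in>EE. E O F\<inverse> \<subseteq> D) \<and>
     \<Union>EE = X \<times> X"

definition bounded_set :: "'a set \<Rightarrow> ('a \<times> 'a) set set \<Rightarrow> 'a set \<Rightarrow> bool" where
  "bounded_set X EE B \<longleftrightarrow> (\<exists>E\<in>EE. \<exists>x\<in>X. B \<subseteq> E `` {x})"

definition asymp_disjoint :: "'a set \<Rightarrow> ('a \<times> 'a) set set \<Rightarrow> 'a set \<Rightarrow> 'a set \<Rightarrow> bool" where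
  "asymp_disjoint X EE A B \<longleftrightarrow> (\<forall>E\<in>EE. bounded_set X EE (E `` A \<inter> E `` B))"

definition asymp_nbhd :: "'a set \<Rightarrow> ('a \<times> 'a) set set \<Rightarrow> 'a set \<Rightarrow> 'a set \<Rightarrow> bool" where
  "asymp_nbhd X EE U A \<longleftrightarrow> (\<forall>E\<in>EE. bounded_set X EE (E `` A - U))"

definition normal_ballean :: "'a set \<Rightarrow> ('a \<times> 'a) set set \<Rightarrow> bool" where
  "normal_ballean X EE \<longleftrightarrow>
     (\<forall>A B. A \<subseteq> X \<and> B \<subseteq> X \<and> asymp_disjoint X EE A B \<longrightarrow>
        (\<exists>U V. U \<subseteq> X \<and> V \<subseteq> X \<and> asymp_nbhd X EE U A \<and> asymp_nbhd X EE V B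
               \<and> U \<inter> V = {}))"

text \<open>The power X^n, with coordinates indexed by {1..n} (matching sym_group n).\<close>
definition pow_carrier :: "nat \<Rightarrow> 'a set \<Rightarrow> (nat \<Rightarrow> 'a) set" where
  "pow_carrier n X = PiE {1..n} (\<lambda>_. X)"

definition pow_ents :: "nat \<Rightarrow> 'a set \<Rightarrow> ('a \<times> 'a) set set \<Rightarrow> ((nat \<Rightarrow> 'a) \<times> (nat \<Rightarrow> 'a)) set set" where
  "pow_ents n X EE =
     {{(x, y). x \<in> pow_carrier n X \<and> y \<in> pow_carrier n X \<and> (\<forall>i\<in>{1..n}. (x i, y i) \<in> Es i)}
      | Es. \<forall>i\<in>{1..n}. Es i \<in> EE}"

definition orbit_of :: "(nat \<Rightarrow> nat) set \<Rightarrow> (nat \<Rightarrow> 'a) \<Rightarrow> (nat \<Rightarrow> 'a) set" where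
  "orbit_of G x = (\<lambda>g. x \<circ> g) ` G"

definition sympow_carrier :: "nat \<Rightarrow> (nat \<Rightarrow> nat) set \<Rightarrow> 'a set \<Rightarrow> (nat \<Rightarrow> 'a) set set" where
  "sympow_carrier n G X = orbit_of G ` pow_carrier n X"

definition sympow_ents :: "nat \<Rightarrow> (nat \<Rightarrow> nat) set \<Rightarrow> 'a set \<Rightarrow> ('a \<times> 'a) set set
    \<Rightarrow> ((nat \<Rightarrow> 'a) set \<times> (nat \<Rightarrow> 'a) set) set set" where
  "sympow_ents n G X EE =
     (\<lambda>E. (\<lambda>(x, y). (orbit_of G x, orbit_of G y)) ` E) ` pow_ents n X EE"

end

theory Submission
  imports Defs
begin

text \<open>The map \<open>xG \<mapsto> xH\<close> from \<open>[X]\<^sup>n\<^sub>G\<close> onto \<open>[X]\<^sup>n\<^sub>H\<close> sends entourages into entourages,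
  pulls bounded sets back to bounded sets, and lets every entourage lift: since an entourage
  \<open>E\<^sup>n\<close> with equal coordinates is invariant under permuting coordinates, an \<open>H\<close>-orbit that is
  \<open>E\<^sup>n\<close>-close to \<open>wH\<close> contains a point \<open>E\<^sup>n\<close>-close to \<open>w\<close> itself. Normality passes along
  such a map: pull two asymptotically disjoint sets back, separate the preimages by disjoint
  asymptotic neighbourhoods \<open>U, V\<close>, and push down \<open>Z - q(Y - U)\<close> and \<open>Z - q(Y - V)\<close>.\<close>

lemma ballean_refl:
  assumes "ballean X EE" "E \<in> EE" "x \<in> X"
  shows "(x, x) \<in> E"
proof -
  have "Id_on X \<subseteq> E"
    using assms(1,2) unfolding ballean_def by simp
  then show ?thesis
    using assms(3) by blast
qed

lemma ballean_entourage_subset: "ballean X EE \<Longrightarrow> E \<in> EE \<Longrightarrow> E \<subseteq> X \<times> X"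
  unfolding ballean_def by simp

lemma ballean_comp_converse:
  "ballean X EE \<Longrightarrow> E \<in> EE \<Longrightarrow> F \<in> EE \<Longrightarrow> \<exists>D\<in>EE. E O F\<inverse> \<subseteq> D"
  unfolding ballean_def by simp

lemma ballean_covers:
  assumes "ballean X EE" "x \<in> X" "y \<in> X"
  shows "\<exists>E\<in>EE. (x, y) \<in> E"
proof -
  have "(x, y) \<in> \<Union>EE"
    using assms unfolding ballean_def by simp
  then show ?thesis
    by blast
qed

lemma ballean_comp:
  assumes "ballean X EE" "E \<in> EE" "F \<in> EE"
  shows "\<exists>D\<in>EE. E O F \<subseteq> D"
proof -
  obtain D1 where D1: "D1 \<in> EE" "F O F\<inverse> \<subseteq> D1"
    using ballean_comp_converse[OF assms(1,3,3)] by blast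
  have "F \<subseteq> D1\<inverse>"
  proof
    fix p assume p: "p \<in> F"
    then obtain a b where ab: "p = (a, b)" "b \<in> X"
      using ballean_entourage_subset[OF assms(1,3)] by blast
    then have "(b, a) \<in> F O F\<inverse>"
      using p ballean_refl[OF assms(1,3)] by blast
    then show "p \<in> D1\<inverse>"
      using D1(2) ab(1) by blast
  qed
  then have "E O F \<subseteq> E O D1\<inverse>"
    by blast
  moreover obtain D where "D \<in> EE" "E O D1\<inverse> \<subseteq> D"
    using ballean_comp_converse[OF assms(1,2) D1(1)] by blast
  ultimately show ?thesis
    by (meson subset_trans)
qed

lemma ballean_upper_bound:
  assumes "ballean X EE" "E \<in> EE" "F \<in> EE"
  shows "\<exists>D\<in>EE. E \<subseteq> D \<and> F \<subseteq> D"
proof -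
  have E: "E \<subseteq> E O F"
  proof
    fix p assume p: "p \<in> E"
    then obtain a b where ab: "p = (a, b)" "b \<in> X"
      using ballean_entourage_subset[OF assms(1,2)] by blast
    show "p \<in> E O F"
      using p ballean_refl[OF assms(1,3) ab(2)] unfolding ab(1) by (rule relcompI)
  qed
  have F: "F \<subseteq> E O F"
  proof
    fix p assume p: "p \<in> F"
    then obtain a b where ab: "p = (a, b)" "a \<in> X"
      using ballean_entourage_subset[OF assms(1,3)] by blast
    show "p \<in> E O F"
      using ballean_refl[OF assms(1,2) ab(2)] p unfolding ab(1) by (rule relcompI)
  qed
  obtain D where D: "D \<in> EE" "E O F \<subseteq> D"
    using ballean_comp[OF assms] by blast
  then show ?thesis
    using subset_trans[OF E D(2)] subset_trans[OF F D(2)] by blast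
qed

text \<open>The guard \<open>I \<noteq> {}\<close> is needed: an empty carrier admits \<open>EE = {}\<close>.\<close>
lemma ballean_finite_bound:
  assumes "ballean X EE" "finite I" "\<And>i. i \<in> I \<Longrightarrow> Es i \<in> EE"
  shows "\<exists>F. (I \<noteq> {} \<longrightarrow> F \<in> EE) \<and> (\<forall>i\<in>I. Es i \<subseteq> F)"
  using assms(2,3)
proof (induction I rule: finite_induct)
  case empty
  show ?case
    by blast
next
  case (insert i I)
  then obtain F where F: "I \<noteq> {} \<longrightarrow> F \<in> EE" "\<forall>j\<in>I. Es j \<subseteq> F"
    by blast
  show ?case
  proof (cases "I = {}")
    case True
    then show ?thesis
      using insert.prems by blast
  next
    case False
    then obtain D where "D \<in> EE" "Es i \<subseteq> D" "F \<subseteq> D"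
      using ballean_upper_bound[OF assms(1), of "Es i" F] F insert.prems by blast
    then show ?thesis
      using F(2) by blast
  qed
qed

lemma ballean_finite_points_bound:
  assumes "ballean X EE" "finite I" "x ` I \<subseteq> X"
  shows "\<exists>F. (I \<noteq> {} \<longrightarrow> F \<in> EE) \<and> (\<forall>i\<in>I. \<forall>j\<in>I. (x i, x j) \<in> F)"
proof -
  have pairs: "\<forall>p\<in>I \<times> I. \<exists>E. E \<in> EE \<and> (x (fst p), x (snd p)) \<in> E"
  proof
    fix p assume "p \<in> I \<times> I"
    then have "x (fst p) \<in> X" "x (snd p) \<in> X"
      using assms(3) by auto
    then show "\<exists>E. E \<in> EE \<and> (x (fst p), x (snd p)) \<in> E"
      using ballean_covers[OF assms(1)] by blast
  qed
  obtain Es where Es: "\<forall>p\<in>I \<times> I. Es p \<in> EE \<and> (x (fst p), x (snd p)) \<in> Es p"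
    using bchoice[OF pairs] by blast
  obtain F where F: "I \<times> I \<noteq> {} \<longrightarrow> F \<in> EE" "\<forall>p\<in>I \<times> I. Es p \<subseteq> F"
    using ballean_finite_bound[OF assms(1) finite_cartesian_product[OF assms(2,2)], of Es] Es
    by blast
  have "(x i, x j) \<in> F" if "i \<in> I" "j \<in> I" for i j
    using Es F(2) that by fastforce
  moreover have "I \<noteq> {} \<longrightarrow> F \<in> EE"
    using F(1) by blast
  ultimately show ?thesis
    by blast
qed

lemma bounded_set_mono: "bounded_set X EE B \<Longrightarrow> C \<subseteq> B \<Longrightarrow> bounded_set X EE C"
  unfolding bounded_set_def by blast

lemma bounded_set_image:
  assumes uniform: "\<And>e. e \<in> EY \<Longrightarrow> \<exists>e'\<in>EZ. map_prod q q ` e \<subseteq> e'"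
    and "q ` Y \<subseteq> Z" and "bounded_set Y EY B"
  shows "bounded_set Z EZ (q ` B)"
proof -
  obtain e y where e: "e \<in> EY" "y \<in> Y" "B \<subseteq> e `` {y}"
    using assms(3) unfolding bounded_set_def by blast
  obtain e' where e': "e' \<in> EZ" "map_prod q q ` e \<subseteq> e'"
    using uniform e(1) by blast
  have "q ` B \<subseteq> e' `` {q y}"
    using e(3) e'(2) by force
  then show ?thesis
    using e'(1) e(2) assms(2) unfolding bounded_set_def by blast
qed

lemma asymp_disjoint_vimage:
  assumes uniform: "\<And>e. e \<in> EY \<Longrightarrow> \<exists>e'\<in>EZ. map_prod q q ` e \<subseteq> e'"
    and proper: "\<And>C. bounded_set Z EZ C \<Longrightarrow> bounded_set Y EY (Y \<inter> q -` C)"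
    and ents: "\<And>e. e \<in> EY \<Longrightarrow> e \<subseteq> Y \<times> Y"
    and "asymp_disjoint Z EZ A B"
  shows "asymp_disjoint Y EY (Y \<inter> q -` A) (Y \<inter> q -` B)"
  unfolding asymp_disjoint_def
proof
  fix e assume e: "e \<in> EY"
  obtain e' where e': "e' \<in> EZ" "map_prod q q ` e \<subseteq> e'"
    using uniform e by blast
  have "e `` (Y \<inter> q -` A) \<inter> e `` (Y \<inter> q -` B) \<subseteq> Y \<inter> q -` (e' `` A \<inter> e' `` B)"
    using e'(2) ents[OF e] by force
  moreover have "bounded_set Z EZ (e' `` A \<inter> e' `` B)"
    using assms(4) e'(1) unfolding asymp_disjoint_def by blast
  ultimately show "bounded_set Y EY (e `` (Y \<inter> q -` A) \<inter> e `` (Y \<inter> q -` B))"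
    using bounded_set_mono[OF proper] by blast
qed

lemma asymp_nbhd_image:
  assumes uniform: "\<And>e. e \<in> EY \<Longrightarrow> \<exists>e'\<in>EZ. map_prod q q ` e \<subseteq> e'"
    and lift: "\<And>e. e \<in> EZ \<Longrightarrow> \<exists>e'\<in>EY. \<forall>A. Y \<inter> q -` (e `` A) \<subseteq> e' `` (Y \<inter> q -` A)"
    and ents: "\<And>e. e \<in> EZ \<Longrightarrow> e \<subseteq> Z \<times> Z"
    and "q ` Y \<subseteq> Z" and "asymp_nbhd Y EY W (Y \<inter> q -` A)"
  shows "asymp_nbhd Z EZ (Z - q ` (Y - W)) A"
  unfolding asymp_nbhd_def
proof
  fix e assume e: "e \<in> EZ"
  obtain e' where e': "e' \<in> EY" "\<forall>A. Y \<inter> q -` (e `` A) \<subseteq> e' `` (Y \<inter> q -` A)"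
    using lift e by blast
  have sub: "e `` A - (Z - q ` (Y - W)) \<subseteq> q ` (e' `` (Y \<inter> q -` A) - W)"
  proof
    fix z assume z: "z \<in> e `` A - (Z - q ` (Y - W))"
    then have "z \<in> Z"
      using ents[OF e] by blast
    with z obtain y where y: "y \<in> Y" "y \<notin> W" "z = q y"
      by blast
    then have "y \<in> Y \<inter> q -` (e `` A)"
      using z by blast
    then have "y \<in> e' `` (Y \<inter> q -` A)"
      using e'(2) by blast
    then show "z \<in> q ` (e' `` (Y \<inter> q -` A) - W)"
      using y by blast
  qed
  have "bounded_set Y EY (e' `` (Y \<inter> q -` A) - W)"
    using assms(5) e'(1) unfolding asymp_nbhd_def by blast
  then show "bounded_set Z EZ (e `` A - (Z - q ` (Y - W)))"
    using bounded_set_mono[OF bounded_set_image[OF uniform assms(4)] sub] by blast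
qed

lemma normal_ballean_image:
  assumes "normal_ballean Y EY"
    and uniform: "\<And>e. e \<in> EY \<Longrightarrow> \<exists>e'\<in>EZ. map_prod q q ` e \<subseteq> e'"
    and proper: "\<And>C. bounded_set Z EZ C \<Longrightarrow> bounded_set Y EY (Y \<inter> q -` C)"
    and lift: "\<And>e. e \<in> EZ \<Longrightarrow> \<exists>e'\<in>EY. \<forall>A. Y \<inter> q -` (e `` A) \<subseteq> e' `` (Y \<inter> q -` A)"
    and "\<And>e. e \<in> EY \<Longrightarrow> e \<subseteq> Y \<times> Y" "\<And>e. e \<in> EZ \<Longrightarrow> e \<subseteq> Z \<times> Z"
    and "q ` Y = Z"
  shows "normal_ballean Z EZ"
  unfolding normal_ballean_def
proof (intro allI impI)
  fix A B assume "A \<subseteq> Z \<and> B \<subseteq> Z \<and> asymp_disjoint Z EZ A B"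
  then have disj: "asymp_disjoint Z EZ A B"
    by blast
  have "asymp_disjoint Y EY (Y \<inter> q -` A) (Y \<inter> q -` B)"
    using asymp_disjoint_vimage[OF uniform proper assms(5) disj] .
  then have "\<exists>U V. U \<subseteq> Y \<and> V \<subseteq> Y \<and> asymp_nbhd Y EY U (Y \<inter> q -` A)
      \<and> asymp_nbhd Y EY V (Y \<inter> q -` B) \<and> U \<inter> V = {}"
    by (intro assms(1)[unfolded normal_ballean_def, rule_format]) simp
  then obtain U V where UV: "asymp_nbhd Y EY U (Y \<inter> q -` A)"
    "asymp_nbhd Y EY V (Y \<inter> q -` B)" "U \<inter> V = {}"
    by blast
  let ?U = "Z - q ` (Y - U)" and ?V = "Z - q ` (Y - V)"
  have "asymp_nbhd Z EZ ?U A" "asymp_nbhd Z EZ ?V B"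
    using asymp_nbhd_image[OF uniform lift assms(6) equalityD1[OF assms(7)]] UV(1,2) by simp_all
  moreover have "?U \<inter> ?V = {}"
  proof -
    have "q ` Y \<subseteq> q ` (Y - U) \<union> q ` (Y - V)"
      using UV(3) by blast
    then show ?thesis
      using assms(7) by blast
  qed
  moreover have "?U \<subseteq> Z" "?V \<subseteq> Z"
    by simp_all
  ultimately show "\<exists>U V. U \<subseteq> Z \<and> V \<subseteq> Z \<and> asymp_nbhd Z EZ U A \<and> asymp_nbhd Z EZ V B
      \<and> U \<inter> V = {}"
    by blast
qed

lemma sym_subgroup_id: "subgroup K (sym_group n) \<Longrightarrow> id \<in> K"
  using subgroup.one_closed by (fastforce simp: sym_group_one)

lemma sym_subgroup_comp: "subgroup K (sym_group n) \<Longrightarrow> k \<in> K \<Longrightarrow> h \<in> K \<Longrightarrow> k \<circ> h \<in> K"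
  using subgroup.m_closed by (fastforce simp: sym_group_mult)

lemma sym_subgroup_inv: "subgroup K (sym_group n) \<Longrightarrow> k \<in> K \<Longrightarrow> inv' k \<in> K"
  using subgroup.m_inv_closed[of K "sym_group n" k] subgroup.mem_carrier[of K "sym_group n" k] by simp

lemma sym_subgroup_permutes: "subgroup K (sym_group n) \<Longrightarrow> k \<in> K \<Longrightarrow> k permutes {1..n}"
  using subgroup.mem_carrier[of K "sym_group n" k] by (simp add: sym_group_carrier)

lemma orbit_of_comp:
  assumes "subgroup K (sym_group n)" "k \<in> K"
  shows "orbit_of K (x \<circ> k) = orbit_of K x"
proof -
  have "(\<circ>) k ` K = K"
  proof
    show "(\<circ>) k ` K \<subseteq> K"
      using sym_subgroup_comp[OF assms(1,2)] by blast
    show "K \<subseteq> (\<circ>) k ` K"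
    proof
      fix h assume "h \<in> K"
      then have "inv' k \<circ> h \<in> K"
        using sym_subgroup_comp[OF assms(1) sym_subgroup_inv[OF assms]] by blast
      moreover have "h = k \<circ> (inv' k \<circ> h)"
        using permutes_inv_o(1)[OF sym_subgroup_permutes[OF assms]] by (simp add: o_assoc)
      ultimately show "h \<in> (\<circ>) k ` K"
        by blast
    qed
  qed
  moreover have "orbit_of K (x \<circ> k) = (\<lambda>g. x \<circ> g) ` ((\<circ>) k ` K)"
    unfolding orbit_of_def image_image by (simp add: comp_assoc)
  ultimately show ?thesis
    unfolding orbit_of_def by simp
qed

lemma orbit_of_self: "subgroup K (sym_group n) \<Longrightarrow> x \<in> orbit_of K x"
  unfolding orbit_of_def by (rule image_eqI[of _ _ id]) (simp_all add: sym_subgroup_id)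

lemma orbit_of_eq_iff:
  assumes "subgroup K (sym_group n)"
  shows "orbit_of K x = orbit_of K y \<longleftrightarrow> (\<exists>k\<in>K. x = y \<circ> k)"
proof
  assume "orbit_of K x = orbit_of K y"
  with orbit_of_self[OF assms] show "\<exists>k\<in>K. x = y \<circ> k"
    unfolding orbit_of_def by blast
qed (use orbit_of_comp[OF assms] in blast)

definition pow_ent :: "nat \<Rightarrow> 'a set \<Rightarrow> (nat \<Rightarrow> ('a \<times> 'a) set) \<Rightarrow> ((nat \<Rightarrow> 'a) \<times> (nat \<Rightarrow> 'a)) set"
  where "pow_ent n X Es =
    {(x, y). x \<in> pow_carrier n X \<and> y \<in> pow_carrier n X \<and> (\<forall>i\<in>{1..n}. (x i, y i) \<in> Es i)}"

definition orbit_rel :: "(nat \<Rightarrow> nat) set \<Rightarrow> ((nat \<Rightarrow> 'a) \<times> (nat \<Rightarrow> 'a)) set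
    \<Rightarrow> ((nat \<Rightarrow> 'a) set \<times> (nat \<Rightarrow> 'a) set) set"
  where "orbit_rel K E = map_prod (orbit_of K) (orbit_of K) ` E"

lemma sympow_ents_eq:
  "sympow_ents n K X EE = {orbit_rel K (pow_ent n X Es) | Es. \<forall>i\<in>{1..n}. Es i \<in> EE}"
  unfolding sympow_ents_def pow_ents_def pow_ent_def orbit_rel_def map_prod_def by blast

lemma sympow_ents_subset:
  "e \<in> sympow_ents n K X EE \<Longrightarrow> e \<subseteq> sympow_carrier n K X \<times> sympow_carrier n K X"
  unfolding sympow_ents_eq sympow_carrier_def orbit_rel_def pow_ent_def by auto

lemma pow_ent_mono:
  "(\<And>i. i \<in> {1..n} \<Longrightarrow> Es i \<subseteq> Fs i) \<Longrightarrow> pow_ent n X Es \<subseteq> pow_ent n X Fs"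
  unfolding pow_ent_def by blast

lemma pow_ent_le_const:
  assumes "ballean X EE" "\<forall>i\<in>{1..n}. Es i \<in> EE"
  obtains F where "{1..n} \<noteq> {} \<longrightarrow> F \<in> EE" "pow_ent n X Es \<subseteq> pow_ent n X (\<lambda>_. F)"
proof -
  obtain F where "{1..n} \<noteq> {} \<longrightarrow> F \<in> EE" "\<forall>i\<in>{1..n}. Es i \<subseteq> F"
    using ballean_finite_bound[OF assms(1) finite_atLeastAtMost] assms(2) by blast
  then show thesis
    using that[of F] pow_ent_mono[of n Es "\<lambda>_. F"] by blast
qed

lemma orbit_rel_const_in_sympow_ents:
  "{1..n} \<noteq> {} \<longrightarrow> F \<in> EE \<Longrightarrow> orbit_rel K (pow_ent n X (\<lambda>_. F)) \<in> sympow_ents n K X EE"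
  unfolding sympow_ents_eq by blast

lemma pow_carrier_comp_permutes:
  assumes "h permutes {1..n}" "x \<in> pow_carrier n X"
  shows "x \<circ> h \<in> pow_carrier n X"
  using assms permutes_in_image[OF assms(1)] permutes_not_in[OF assms(1)]
  unfolding pow_carrier_def PiE_def Pi_def extensional_def by auto

lemma pow_ent_const_comp_permutes:
  assumes "h permutes {1..n}" "(x, y) \<in> pow_ent n X (\<lambda>_. F)"
  shows "(x \<circ> h, y \<circ> h) \<in> pow_ent n X (\<lambda>_. F)"
  using assms pow_carrier_comp_permutes[OF assms(1)] permutes_in_image[OF assms(1)]
  unfolding pow_ent_def by auto

text \<open>Because constant entourages are invariant under permuting coordinates, the right-hand
  representative can be prescribed.\<close>
lemma orbit_rel_const_pow_entE:
  assumes "subgroup K (sym_group n)" "(S, orbit_of K y) \<in> orbit_rel K (pow_ent n X (\<lambda>_. F))"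
  obtains x where "S = orbit_of K x" "(x, y) \<in> pow_ent n X (\<lambda>_. F)"
proof -
  obtain u v where uv: "S = orbit_of K u" "orbit_of K y = orbit_of K v"
    "(u, v) \<in> pow_ent n X (\<lambda>_. F)"
    using assms(2) unfolding orbit_rel_def by auto
  then obtain k where k: "k \<in> K" "v = y \<circ> k"
    using orbit_of_eq_iff[OF assms(1), of v y] by blast
  have k': "inv' k \<in> K" "inv' k permutes {1..n}"
    using sym_subgroup_inv[OF assms(1) k(1)] sym_subgroup_permutes[OF assms(1)] by blast+
  have "v \<circ> inv' k = y"
    using k(2) permutes_inv_o(1)[OF sym_subgroup_permutes[OF assms(1) k(1)]] by (simp add: comp_assoc)
  then have "(u \<circ> inv' k, y) \<in> pow_ent n X (\<lambda>_. F)"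
    using pow_ent_const_comp_permutes[OF k'(2) uv(3)] by simp
  moreover have "S = orbit_of K (u \<circ> inv' k)"
    using uv(1) by (simp add: orbit_of_comp[OF assms(1) k'(1)])
  ultimately show ?thesis
    using that by blast
qed

text \<open>The map \<open>xG \<mapsto> xH\<close>; the choice of representative is irrelevant since \<open>G \<subseteq> H\<close>.\<close>
definition orbit_coarsening :: "(nat \<Rightarrow> nat) set \<Rightarrow> (nat \<Rightarrow> 'a) set \<Rightarrow> (nat \<Rightarrow> 'a) set"
  where "orbit_coarsening H S = orbit_of H (SOME x. x \<in> S)"

context
  fixes n :: nat and G H :: "(nat \<Rightarrow> nat) set"
  assumes G: "subgroup G (sym_group n)" and H: "subgroup H (sym_group n)" and "G \<subseteq> H"
begin

lemma orbit_coarsening_orbit_of [simp]: "orbit_coarsening H (orbit_of G x) = orbit_of H x"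
proof -
  have "(SOME y. y \<in> orbit_of G x) \<in> orbit_of G x"
    using orbit_of_self[OF G, of x] by (auto simp: some_in_eq)
  then obtain g where "g \<in> H" "(SOME y. y \<in> orbit_of G x) = x \<circ> g"
    using \<open>G \<subseteq> H\<close> unfolding orbit_of_def by blast
  then show ?thesis
    unfolding orbit_coarsening_def using orbit_of_comp[OF H] by simp
qed

lemma orbit_coarsening_orbit_rel:
  "map_prod (orbit_coarsening H) (orbit_coarsening H) ` orbit_rel G E = orbit_rel H E"
proof -
  have "(\<lambda>p. map_prod (orbit_coarsening H) (orbit_coarsening H) (map_prod (orbit_of G) (orbit_of G) p))
      = map_prod (orbit_of H) (orbit_of H)"
    by (auto simp: fun_eq_iff)
  then show ?thesis
    unfolding orbit_rel_def image_image by (rule arg_cong)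
qed

lemma orbit_coarsening_sympow_carrier:
  "orbit_coarsening H ` sympow_carrier n G X = sympow_carrier n H X"
  unfolding sympow_carrier_def image_image by simp

lemma orbit_coarsening_uniform:
  assumes "e \<in> sympow_ents n G X EE"
  shows "\<exists>e'\<in>sympow_ents n H X EE. map_prod (orbit_coarsening H) (orbit_coarsening H) ` e \<subseteq> e'"
proof -
  obtain Es where "\<forall>i\<in>{1..n}. Es i \<in> EE" "e = orbit_rel G (pow_ent n X Es)"
    using assms unfolding sympow_ents_eq by blast
  then show ?thesis
    by (intro bexI[of _ "orbit_rel H (pow_ent n X Es)"])
      (auto simp: sympow_ents_eq orbit_coarsening_orbit_rel)
qed

lemma orbit_coarsening_lift:
  assumes "ballean X EE" "e \<in> sympow_ents n H X EE"
  shows "\<exists>e'\<in>sympow_ents n G X EE. \<forall>A.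
    sympow_carrier n G X \<inter> orbit_coarsening H -` (e `` A)
      \<subseteq> e' `` (sympow_carrier n G X \<inter> orbit_coarsening H -` A)"
proof -
  obtain Es where Es: "\<forall>i\<in>{1..n}. Es i \<in> EE" "e = orbit_rel H (pow_ent n X Es)"
    using assms(2) unfolding sympow_ents_eq by blast
  obtain F where F0: "{1..n} \<noteq> {} \<longrightarrow> F \<in> EE" "pow_ent n X Es \<subseteq> pow_ent n X (\<lambda>_. F)"
    using pow_ent_le_const[OF assms(1) Es(1)] .
  then have F: "{1..n} \<noteq> {} \<longrightarrow> F \<in> EE" "e \<subseteq> orbit_rel H (pow_ent n X (\<lambda>_. F))"
    unfolding Es(2) orbit_rel_def by (simp_all add: image_mono)
  let ?Y = "sympow_carrier n G X" and ?q = "orbit_coarsening H"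
  have "?Y \<inter> ?q -` (e `` A) \<subseteq> orbit_rel G (pow_ent n X (\<lambda>_. F)) `` (?Y \<inter> ?q -` A)" for A
  proof
    fix S assume S: "S \<in> ?Y \<inter> ?q -` (e `` A)"
    then obtain w where w: "S = orbit_of G w"
      unfolding sympow_carrier_def by blast
    have "orbit_of H w \<in> e `` A"
      using S unfolding w by simp
    then obtain T where T: "T \<in> A" "(T, orbit_of H w) \<in> orbit_rel H (pow_ent n X (\<lambda>_. F))"
      using F(2) by blast
    then obtain x where x: "T = orbit_of H x" "(x, w) \<in> pow_ent n X (\<lambda>_. F)"
      by (elim orbit_rel_const_pow_entE[OF H])
    then have "orbit_of G x \<in> ?Y \<inter> ?q -` A"
      using T(1) unfolding sympow_carrier_def pow_ent_def by auto
    moreover have "(orbit_of G x, S) \<in> orbit_rel G (pow_ent n X (\<lambda>_. F))"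
      unfolding orbit_rel_def w using x(2) by (rule map_prod_imageI)
    ultimately show "S \<in> orbit_rel G (pow_ent n X (\<lambda>_. F)) `` (?Y \<inter> ?q -` A)"
      by blast
  qed
  then show ?thesis
    using orbit_rel_const_in_sympow_ents[OF F(1)] by blast
qed

lemma orbit_coarsening_vimage_bounded:
  assumes "ballean X EE" "bounded_set (sympow_carrier n H X) (sympow_ents n H X EE) C"
  shows "bounded_set (sympow_carrier n G X) (sympow_ents n G X EE)
    (sympow_carrier n G X \<inter> orbit_coarsening H -` C)"
proof -
  obtain Es x0 where Es: "\<forall>i\<in>{1..n}. Es i \<in> EE" and x0: "x0 \<in> pow_carrier n X"
    and C: "C \<subseteq> orbit_rel H (pow_ent n X Es) `` {orbit_of H x0}"
    using assms(2) unfolding bounded_set_def sympow_ents_eq sympow_carrier_def by blast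
  obtain F0 where F0: "{1..n} \<noteq> {} \<longrightarrow> F0 \<in> EE" "pow_ent n X Es \<subseteq> pow_ent n X (\<lambda>_. F0)"
    using pow_ent_le_const[OF assms(1) Es] .
  obtain F1 where F1: "{1..n} \<noteq> {} \<longrightarrow> F1 \<in> EE" "\<forall>i\<in>{1..n}. \<forall>j\<in>{1..n}. (x0 i, x0 j) \<in> F1"
    using ballean_finite_points_bound[OF assms(1), of "{1..n}" x0] x0
    unfolding pow_carrier_def by auto
  obtain F where F: "{1..n} \<noteq> {} \<longrightarrow> F \<in> EE" "F1 O F0 \<subseteq> F"
    using ballean_comp[OF assms(1)] F0(1) F1(1) by (cases "{1..n} = {}") blast+
  let ?Y = "sympow_carrier n G X" and ?q = "orbit_coarsening H"
  have "?Y \<inter> ?q -` C \<subseteq> orbit_rel G (pow_ent n X (\<lambda>_. F)) `` {orbit_of G x0}"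
  proof
    fix S assume S: "S \<in> ?Y \<inter> ?q -` C"
    then obtain w where w: "S = orbit_of G w"
      unfolding sympow_carrier_def by blast
    moreover have "orbit_rel H (pow_ent n X Es) \<subseteq> orbit_rel H (pow_ent n X (\<lambda>_. F0))"
      unfolding orbit_rel_def using F0(2) by (rule image_mono)
    ultimately have "(orbit_of H x0, orbit_of H w) \<in> orbit_rel H (pow_ent n X (\<lambda>_. F0))"
      using S C by auto
    then obtain x where x: "orbit_of H x0 = orbit_of H x" "(x, w) \<in> pow_ent n X (\<lambda>_. F0)"
      by (elim orbit_rel_const_pow_entE[OF H])
    then obtain k where k: "k \<in> H" "x = x0 \<circ> k"
      using orbit_of_eq_iff[OF H, of x x0] by metis
    have "(x0 i, w i) \<in> F" if "i \<in> {1..n}" for i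
    proof -
      have "(x0 i, x0 (k i)) \<in> F1"
        using F1(2) that permutes_in_image[OF sym_subgroup_permutes[OF H k(1)]] by blast
      moreover have "(x0 (k i), w i) \<in> F0"
        using x(2) k(2) that unfolding pow_ent_def by auto
      ultimately show ?thesis
        using F(2) by blast
    qed
    then have "(x0, w) \<in> pow_ent n X (\<lambda>_. F)"
      using x(2) x0 unfolding pow_ent_def by auto
    then show "S \<in> orbit_rel G (pow_ent n X (\<lambda>_. F)) `` {orbit_of G x0}"
      unfolding orbit_rel_def w by (auto intro: map_prod_imageI)
  qed
  moreover have "orbit_of G x0 \<in> ?Y"
    using x0 unfolding sympow_carrier_def by blast
  ultimately show ?thesis
    using orbit_rel_const_in_sympow_ents[OF F(1)] unfolding bounded_set_def by blast
qed

end

theorem theorem1p13: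
  fixes n :: nat and G H :: "(nat \<Rightarrow> nat) set"
    and X :: "'a set" and EE :: "('a \<times> 'a) set set"
  assumes "subgroup G (sym_group n)" and "subgroup H (sym_group n)" and "G \<subseteq> H"
    and "ballean X EE"
    and "normal_ballean (sympow_carrier n G X) (sympow_ents n G X EE)"
  shows "normal_ballean (sympow_carrier n H X) (sympow_ents n H X EE)"
proof (rule normal_ballean_image[where q = "orbit_coarsening H", OF assms(5)])
  show "\<exists>e'\<in>sympow_ents n H X EE. map_prod (orbit_coarsening H) (orbit_coarsening H) ` e \<subseteq> e'"
    if "e \<in> sympow_ents n G X EE" for e
    using orbit_coarsening_uniform[OF assms(1-3) that] .
  show "bounded_set (sympow_carrier n G X) (sympow_ents n G X EE)
      (sympow_carrier n G X \<inter> orbit_coarsening H -` C)"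
    if "bounded_set (sympow_carrier n H X) (sympow_ents n H X EE) C" for C
    using orbit_coarsening_vimage_bounded[OF assms(1-4) that] .
  show "\<exists>e'\<in>sympow_ents n G X EE. \<forall>A. sympow_carrier n G X \<inter> orbit_coarsening H -` (e `` A)
      \<subseteq> e' `` (sympow_carrier n G X \<inter> orbit_coarsening H -` A)"
    if "e \<in> sympow_ents n H X EE" for e
    using orbit_coarsening_lift[OF assms(1-4) that] .
  show "orbit_coarsening H ` sympow_carrier n G X = sympow_carrier n H X"
    using orbit_coarsening_sympow_carrier[OF assms(1-3)] .
qed (use sympow_ents_subset in blast)+

end
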